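(* Let $w:\mathbb{Z}\to\mathbb{R}$ be a weight with $w(n)\geq 1$ for all $n$ and $\sup_{n\in\mathbb{Z}}\big(|\tfrac{w(n+1)}{w(n)}|+|\tfrac{w(n)}{w(n+1)}|\big)<\infty$, and fix $1\leq p\leq\infty$. Suppose $(\alpha(n,t),\beta(n,t))$ and $(\tilde\alpha(n,t),\tilde\beta(n,t))$ are arbitrary bounded solutions, defined for $t\in(t_0-T,t_0+T)$, of the Ablowitz--Ladik system \[ -i\alpha_t-(1-\alpha\beta)(\alpha^-+\alpha^+)+2\alpha=0,\qquad -i\beta_t+(1-\alpha\beta)(\beta^-+\beta^+)-2\beta=0. \] If $\|(\alpha(t)-\tilde\alpha(t),\beta(t)-\tilde\beta(t))\|_{w,p}<\infty$ holds for $t=t_0$, then it holds for all $t\in(t_0-T,t_0+T)$.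
   Context: Here $\alpha,\beta,\tilde\alpha,\tilde\beta:\mathbb{Z}\times\mathbb{R}\to\mathbb{C}$ are bounded on $\mathbb{Z}\times(t_0-T,t_0+T)$ and $C^1$ in $t$ for each $n$, and $f^\pm(n,t)=f(n\pm1,t)$. $T>0$ is the length of the local existence interval of the solutions. For pairs of sequences $(\alpha,\beta)$, \[ \|(\alpha,\beta)\|_{w,p}=\Big(\sum_{n\in\mathbb{Z}} w(n)\big(|\alpha(n)|^p+|\beta(n)|^p\big)\Big)^{1/p}\ (1\leq p<\infty),\qquad \|(\alpha,\beta)\|_{w,\infty}=\sup_{n\in\mathbb{Z}} w(n)\big(|\alpha(n)|+|\beta(n)|\big). \] *)

theory Defs
  imports "HOL-Analysis.Analysis"
begin

definition wnorm_finite :: "(int \<Rightarrow> real) \<Rightarrow> ereal \<Rightarrow> (int \<Rightarrow> complex) \<Rightarrow> (int \<Rightarrow> complex) \<Rightarrow> bool" where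
  "wnorm_finite w p a b =
     (if p = \<infinity> then bdd_above (range (\<lambda>n. w n * (norm (a n) + norm (b n))))
      else (\<lambda>n. w n * (norm (a n) powr real_of_ereal p + norm (b n) powr real_of_ereal p))
             summable_on UNIV)"

definition AL_solution :: "real \<Rightarrow> real \<Rightarrow> (int \<Rightarrow> real \<Rightarrow> complex) \<Rightarrow> (int \<Rightarrow> real \<Rightarrow> complex) \<Rightarrow> bool" where
  "AL_solution t0 T \<alpha> \<beta> =
    ((\<exists>M. \<forall>n. \<forall>t\<in>{t0-T<..<t0+T}. norm (\<alpha> n t) \<le> M \<and> norm (\<beta> n t) \<le> M) \<and>
     (\<forall>n. (\<forall>t\<in>{t0-T<..<t0+T}. \<alpha> n differentiable at t \<and> \<beta> n differentiable at t) \<and>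
          continuous_on {t0-T<..<t0+T} (\<lambda>t. vector_derivative (\<alpha> n) (at t)) \<and>
          continuous_on {t0-T<..<t0+T} (\<lambda>t. vector_derivative (\<beta> n) (at t))) \<and>
     (\<forall>n. \<forall>t\<in>{t0-T<..<t0+T}.
        - \<i> * vector_derivative (\<alpha> n) (at t)
          - (1 - \<alpha> n t * \<beta> n t) * (\<alpha> (n-1) t + \<alpha> (n+1) t) + 2 * \<alpha> n t = 0 \<and>
        - \<i> * vector_derivative (\<beta> n) (at t)
          + (1 - \<alpha> n t * \<beta> n t) * (\<beta> (n-1) t + \<beta> (n+1) t) - 2 * \<beta> n t = 0))"

end

theory Submission
  imports Defs
begin

text \<open>
  The difference \<open>d\<close> of two bounded solutions obeys a nearest-neighbour differential inequality
  \<open>|d\<^sub>n'| \<le> c (|d\<^sub>n\<^sub>-\<^sub>1| + |d\<^sub>n| + |d\<^sub>n\<^sub>+\<^sub>1|)\<close>, where \<open>c\<close> depends only on the sup bound of the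
  solutions. Picard iteration shows that such an inequality propagates every initial bound
  \<open>G \<ge> |d(t\<^sub>0)|\<close> that is a discrete supersolution, \<open>G\<^sub>n\<^sub>-\<^sub>1 + G\<^sub>n + G\<^sub>n\<^sub>+\<^sub>1 \<le> \<mu> G\<^sub>n\<close>, in the form
  \<open>|d\<^sub>n(t)| \<le> exp (c \<mu> |t - t\<^sub>0|) G\<^sub>n\<close>; the a priori bound on \<open>d\<close> makes the remainder
  \<open>M (3 c |t - t\<^sub>0|)\<^sup>m / m!\<close> vanish. For \<open>G\<close> we take the envelope
  \<open>G\<^sub>n = sup\<^sub>j \<rho>\<^bsup>|j|\<^esup> |d\<^sub>n\<^sub>+\<^sub>j(t\<^sub>0)|\<close>, a supersolution with \<open>\<mu> = 1 + 2/\<rho>\<close>. The ratio condition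
  gives \<open>w\<^sub>n \<le> K\<^bsup>|j|\<^esup> w\<^sub>n\<^sub>+\<^sub>j\<close>, so for \<open>\<rho> K < 1\<close> the envelope stays in the weighted space of
  \<open>d(t\<^sub>0)\<close>: for \<open>p = \<infinity>\<close> directly, for \<open>p < \<infinity>\<close> by comparison with the convolution of
  \<open>w |d(t\<^sub>0)|\<^sup>p\<close> with a geometric kernel.
\<close>

lemma summable_on_int_geometric:
  fixes q :: real
  assumes "0 \<le> q" "q < 1"
  shows "(\<lambda>j::int. q ^ nat \<bar>j\<bar>) summable_on UNIV"
proof -
  have nat: "(\<lambda>k::nat. q ^ k) summable_on UNIV"
    using assms by (subst summable_on_UNIV_nonneg_real_iff) (auto intro: summable_geometric)
  have "(\<lambda>j::int. q ^ nat \<bar>j\<bar>) summable_on range int"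
    by (subst summable_on_reindex) (auto simp: o_def nat)
  moreover have "(\<lambda>j::int. q ^ nat \<bar>j\<bar>) summable_on range (\<lambda>k. - int k)"
    by (subst summable_on_reindex) (auto simp: o_def nat inj_on_def)
  moreover have "range int \<union> range (\<lambda>k. - int k) = (UNIV :: int set)"
    by (auto intro: int_cases2)
  ultimately show ?thesis
    by (metis summable_on_union)
qed

lemma summable_on_int_convolution:
  fixes k a :: "int \<Rightarrow> real"
  assumes k: "\<And>j. 0 \<le> k j" "k summable_on UNIV"
    and a: "\<And>n. 0 \<le> a n" "a summable_on UNIV"
  shows "(\<lambda>j. k j * a (n + j)) summable_on UNIV"
    and "(\<lambda>n. \<Sum>\<^sub>\<infinity>j. k j * a (n + j)) summable_on UNIV"
proof -
  show row: "(\<lambda>j. k j * a (n + j)) summable_on UNIV" for n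
  proof (rule summable_on_comparison_test[OF summable_on_cmult_left[OF k(2)]])
    show "k j * a (n + j) \<le> k j * infsum a UNIV" for j
      using finite_sum_le_infsum[OF a(2), of "{n + j}"] a(1) k(1)
      by (intro mult_left_mono) auto
  qed (use k a in auto)
  have shift: "bij_betw (\<lambda>n. n + j) UNIV UNIV" for j :: int
    by (rule bij_betwI[of _ _ _ "\<lambda>n. n - j"]) auto
  have rows: "((\<lambda>n. k j * a (n + j)) has_sum k j * infsum a UNIV) UNIV" for j
    using has_sum_cmult_right[OF has_sum_reindex_bij_betw[OF shift, THEN iffD2, OF has_sum_infsum[OF a(2)]]]
    by (simp add: o_def)
  have "(\<lambda>(j, n). k j * a (n + j)) summable_on UNIV \<times> UNIV"
    by (rule summable_on_SigmaI[where g = "\<lambda>j. k j * infsum a UNIV"])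
       (use rows summable_on_cmult_left[OF k(2)] k a in auto)
  then have "(\<lambda>(n, j). k j * a (n + j)) summable_on UNIV \<times> UNIV"
    by (subst summable_on_swap) (simp add: case_prod_unfold)
  then show "(\<lambda>n. \<Sum>\<^sub>\<infinity>j. k j * a (n + j)) summable_on UNIV"
    using summable_on_SigmaD[of "\<lambda>(n, j). k j * a (n + j)" UNIV "\<lambda>_. UNIV"] row by simp
qed

definition envelope :: "real \<Rightarrow> (int \<Rightarrow> real) \<Rightarrow> int \<Rightarrow> real" where
  "envelope \<rho> u n = (SUP j. \<rho> ^ nat \<bar>j\<bar> * u (n + j))"

context
  fixes \<rho> M :: real and u :: "int \<Rightarrow> real"
  assumes nonneg: "\<And>n. 0 \<le> u n" and bounded: "\<And>n. u n \<le> M"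
    and \<rho>: "0 < \<rho>" "\<rho> \<le> 1"
begin

lemma envelope_ge_term: "\<rho> ^ nat \<bar>j\<bar> * u (n + j) \<le> envelope \<rho> u n"
proof -
  have "\<rho> ^ nat \<bar>j\<bar> * u (n + j) \<le> M" for j
    using mult_right_mono[OF power_le_one[OF less_imp_le[OF \<rho>(1)] \<rho>(2)] nonneg] bounded
    by (metis mult_1 order_trans)
  then show ?thesis
    unfolding envelope_def by (intro cSUP_upper bdd_aboveI2) auto
qed

lemma envelope_ge: "u n \<le> envelope \<rho> u n"
  using envelope_ge_term[of 0] by simp

lemma envelope_nonneg: "0 \<le> envelope \<rho> u n"
  using nonneg envelope_ge order_trans by blast

lemma envelope_least: "(\<And>j. \<rho> ^ nat \<bar>j\<bar> * u (n + j) \<le> B) \<Longrightarrow> envelope \<rho> u n \<le> B"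
  unfolding envelope_def by (rule cSUP_least) auto

lemma envelope_powr_least:
  assumes "0 < q" and le: "\<And>j. (\<rho> ^ nat \<bar>j\<bar> * u (n + j)) powr q \<le> B"
  shows "envelope \<rho> u n powr q \<le> B"
proof -
  have B: "0 \<le> B"
    using powr_ge_zero le[of 0] by (rule order_trans)
  have "envelope \<rho> u n \<le> B powr (1 / q)"
  proof (rule envelope_least)
    fix j
    have "\<rho> ^ nat \<bar>j\<bar> * u (n + j) = ((\<rho> ^ nat \<bar>j\<bar> * u (n + j)) powr q) powr (1 / q)"
      using \<open>0 < q\<close> \<rho> nonneg[of "n + j"] by (simp add: powr_powr powr_one_gt_zero_iff)
    also have "\<dots> \<le> B powr (1 / q)"
      using \<open>0 < q\<close> le by (intro powr_mono2) auto
    finally show "\<rho> ^ nat \<bar>j\<bar> * u (n + j) \<le> B powr (1 / q)" .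
  qed
  then have "envelope \<rho> u n powr q \<le> (B powr (1 / q)) powr q"
    using \<open>0 < q\<close> envelope_nonneg by (intro powr_mono2) auto
  also have "\<dots> = B"
    using \<open>0 < q\<close> B by (simp add: powr_powr)
  finally show ?thesis .
qed

lemma envelope_neighbour:
  assumes "\<bar>s\<bar> = 1"
  shows "envelope \<rho> u (n + s) \<le> envelope \<rho> u n / \<rho>"
proof (rule envelope_least)
  fix j
  have "nat \<bar>s + j\<bar> \<le> Suc (nat \<bar>j\<bar>)"
    using assms by linarith
  then have "\<rho> * \<rho> ^ nat \<bar>j\<bar> \<le> \<rho> ^ nat \<bar>s + j\<bar>"
    using \<rho> by (metis power_Suc power_decreasing less_imp_le)
  then have "\<rho> * (\<rho> ^ nat \<bar>j\<bar> * u (n + s + j)) \<le> \<rho> ^ nat \<bar>s + j\<bar> * u (n + (s + j))"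
    using nonneg by (simp add: mult_right_mono add.assoc flip: mult.assoc)
  also have "\<dots> \<le> envelope \<rho> u n"
    by (rule envelope_ge_term)
  finally show "\<rho> ^ nat \<bar>j\<bar> * u (n + s + j) \<le> envelope \<rho> u n / \<rho>"
    using \<rho> by (simp add: pos_le_divide_eq mult.commute)
qed

lemma envelope_neighbours_le:
  "envelope \<rho> u (n - 1) + envelope \<rho> u n + envelope \<rho> u (n + 1) \<le> (1 + 2 / \<rho>) * envelope \<rho> u n"
  using envelope_neighbour[of "-1" n] envelope_neighbour[of 1 n]
  by (simp add: algebra_simps add_divide_distrib)

end

lemma weight_le_power_shift:
  fixes w :: "int \<Rightarrow> real"
  assumes up: "\<And>n. w n \<le> K * w (n + 1)" and down: "\<And>n. w (n + 1) \<le> K * w n"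
    and "K \<ge> 0"
  shows "w n \<le> K ^ nat \<bar>j\<bar> * w (n + j)"
proof -
  have right: "w n \<le> K ^ k * w (n + int k)" for k n
  proof (induction k)
    case (Suc k)
    have "K ^ k * w (n + int k) \<le> K ^ k * (K * w (n + int k + 1))"
      using up \<open>K \<ge> 0\<close> by (intro mult_left_mono) auto
    with Suc show ?case by (simp add: algebra_simps)
  qed simp
  have left: "w n \<le> K ^ k * w (n - int k)" for k n
  proof (induction k)
    case (Suc k)
    have "K ^ k * w (n - int k) \<le> K ^ k * (K * w (n - int k - 1))"
      using down[of "n - int k - 1"] \<open>K \<ge> 0\<close> by (intro mult_left_mono) auto
    with Suc show ?case by (simp add: algebra_simps)
  qed simp
  show ?thesis
    using right[of n "nat j"] left[of n "nat (- j)"] by (cases "j \<ge> 0") auto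
qed

lemma weight_shift_bound_of_bounded_ratio:
  fixes w :: "int \<Rightarrow> real"
  assumes pos: "\<And>n. w n > 0"
    and ratio: "bdd_above (range (\<lambda>n. \<bar>w (n + 1) / w n\<bar> + \<bar>w n / w (n + 1)\<bar>))"
  obtains K where "K \<ge> 1" "\<And>n j. w n \<le> K ^ nat \<bar>j\<bar> * w (n + j)"
proof -
  obtain B where B: "\<And>n. \<bar>w (n + 1) / w n\<bar> + \<bar>w n / w (n + 1)\<bar> \<le> B"
    using ratio by (auto simp: bdd_above_def)
  define K where "K = max 1 B"
  have "w (n + 1) / w n \<le> K" "w n / w (n + 1) \<le> K" for n
    using B[of n] pos[of n] pos[of "n + 1"] unfolding K_def
    by (smt (verit) divide_pos_pos)+
  then have "w n \<le> K * w (n + 1)" "w (n + 1) \<le> K * w n" for n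
    using pos[of n] pos[of "n + 1"] by (simp_all add: divide_le_eq)
  then show ?thesis
    using that[of K] weight_le_power_shift[of w K] by (simp add: K_def)
qed

definition weighted_finite :: "(int \<Rightarrow> real) \<Rightarrow> ereal \<Rightarrow> (int \<Rightarrow> real) \<Rightarrow> bool" where
  "weighted_finite w p u =
     (if p = \<infinity> then bdd_above (range (\<lambda>n. w n * u n))
      else (\<lambda>n. w n * u n powr real_of_ereal p) summable_on UNIV)"

lemma weighted_finite_le:
  assumes w: "\<And>n. 0 \<le> w n" and p: "0 \<le> p" and "0 \<le> C"
    and u: "\<And>n. 0 \<le> u n" "\<And>n. u n \<le> C * v n"
    and fin: "weighted_finite w p v"
  shows "weighted_finite w p u"
proof (cases "p = \<infinity>")
  case True
  then obtain B where B: "\<And>n. w n * v n \<le> B"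
    using fin by (auto simp: weighted_finite_def bdd_above_def)
  have "w n * u n \<le> C * B" for n
  proof -
    have "w n * u n \<le> C * (w n * v n)"
      using mult_left_mono[OF u(2) w] by (simp add: ac_simps)
    also have "\<dots> \<le> C * B"
      using B \<open>0 \<le> C\<close> by (rule mult_left_mono)
    finally show ?thesis .
  qed
  with True show ?thesis
    by (auto simp: weighted_finite_def bdd_above_def)
next
  case False
  define q where "q = real_of_ereal p"
  have q: "0 \<le> q"
    using p unfolding q_def by (cases p) auto
  have "(\<lambda>n. C powr q * (w n * v n powr q)) summable_on UNIV"
    using fin False by (intro summable_on_cmult_right) (simp add: weighted_finite_def q_def)
  then have "(\<lambda>n. w n * u n powr q) summable_on UNIV"
  proof (rule summable_on_comparison_test)
    fix n
    have "u n powr q \<le> (C * v n) powr q"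
      using u q by (intro powr_mono2) auto
    then show "w n * u n powr q \<le> C powr q * (w n * v n powr q)"
      using w[of n] by (simp add: powr_mult mult_left_mono ac_simps)
  qed (use w in simp)
  with False show ?thesis
    by (simp add: weighted_finite_def q_def)
qed

lemma powr_norm_Pair_le:
  fixes x y :: "'a::real_normed_vector" and q :: real
  assumes "0 \<le> q"
  shows "norm (x, y) powr q \<le> 2 powr q * (norm x powr q + norm y powr q)"
proof -
  have "norm (x, y) \<le> 2 * max (norm x) (norm y)"
    using norm_Pair_le[of x y] by linarith
  then have "norm (x, y) powr q \<le> (2 * max (norm x) (norm y)) powr q"
    using assms by (intro powr_mono2) auto
  also have "\<dots> = 2 powr q * max (norm x) (norm y) powr q"
    by (simp add: powr_mult)
  also have "max (norm x) (norm y) powr q \<le> norm x powr q + norm y powr q"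
    by (cases "norm x \<le> norm y") (simp_all add: max_def add_increasing add_increasing2)
  finally show ?thesis
    by (simp add: mult_left_mono)
qed

lemma wnorm_finite_iff_weighted_finite:
  assumes w: "\<And>n. 0 \<le> w n" and p: "0 \<le> p"
  shows "wnorm_finite w p a b \<longleftrightarrow> weighted_finite w p (\<lambda>n. norm (a n, b n))"
proof (cases "p = \<infinity>")
  case True
  have "wnorm_finite w p a b = weighted_finite w p (\<lambda>n. norm (a n) + norm (b n))"
    using True by (simp add: wnorm_finite_def weighted_finite_def)
  also have "\<dots> = weighted_finite w p (\<lambda>n. norm (a n, b n))"
  proof
    show "weighted_finite w p (\<lambda>n. norm (a n, b n))"
      if "weighted_finite w p (\<lambda>n. norm (a n) + norm (b n))"
      by (rule weighted_finite_le[OF w p _ _ _ that, of 1]) (auto intro: norm_Pair_le)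
    show "weighted_finite w p (\<lambda>n. norm (a n) + norm (b n))"
      if "weighted_finite w p (\<lambda>n. norm (a n, b n))"
    proof (rule weighted_finite_le[OF w p _ _ _ that, of 2])
      show "norm (a n) + norm (b n) \<le> 2 * norm (a n, b n)" for n
        using norm_fst_le[of "a n" "b n"] norm_snd_le[of "b n" "a n"] by linarith
    qed simp_all
  qed
  finally show ?thesis .
next
  case False
  define q where "q = real_of_ereal p"
  have q: "0 \<le> q"
    using p unfolding q_def by (cases p) auto
  let ?L = "\<lambda>n. w n * (norm (a n) powr q + norm (b n) powr q)"
  let ?R = "\<lambda>n. w n * norm (a n, b n) powr q"
  have "?R summable_on UNIV" if "?L summable_on UNIV"
  proof (rule summable_on_comparison_test[OF summable_on_cmult_right[OF that, of "2 powr q"]])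
    show "?R n \<le> 2 powr q * ?L n" for n
      using mult_left_mono[OF powr_norm_Pair_le[OF q] w] by (simp add: ac_simps)
  qed (use w in simp)
  moreover have "?L summable_on UNIV" if "?R summable_on UNIV"
  proof (rule summable_on_comparison_test[OF summable_on_cmult_right[OF that, of 2]])
    fix n
    have "norm (a n) powr q + norm (b n) powr q \<le> 2 * norm (a n, b n) powr q"
      using powr_mono2[OF q norm_ge_zero norm_fst_le, of "a n" "b n"]
        powr_mono2[OF q norm_ge_zero norm_snd_le, of "b n" "a n"]
      by linarith
    from mult_left_mono[OF this w[of n]] show "?L n \<le> 2 * ?R n"
      by (simp only: mult.left_commute)
  qed (use w in simp)
  ultimately show ?thesis
    using False by (auto simp: wnorm_finite_def weighted_finite_def q_def)
qed

context
  fixes \<rho> M K :: real and u w :: "int \<Rightarrow> real"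
  assumes nonneg: "\<And>n. 0 \<le> u n" and bounded: "\<And>n. u n \<le> M"
    and \<rho>: "0 < \<rho>" "\<rho> \<le> 1"
    and w_pos: "\<And>n. 0 < w n" and shift: "\<And>n j. w n \<le> K ^ nat \<bar>j\<bar> * w (n + j)"
    and \<rho>K: "\<rho> * K < 1"
begin

lemma shift_constant_pos: "0 < K"
proof (rule ccontr)
  assume "\<not> 0 < K"
  then have "K * w 1 \<le> 0"
    using w_pos[of 1] by (simp add: mult_nonpos_nonneg)
  moreover have "w 0 \<le> K * w 1"
    using shift[of 0 1] by simp
  ultimately show False
    using w_pos[of 0] by linarith
qed

lemma weight_times_envelope_le:
  assumes B: "\<And>j. w (n + j) * u (n + j) \<le> B"
  shows "w n * envelope \<rho> u n \<le> B"
proof -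
  have "0 \<le> B"
    using B[of 0] mult_nonneg_nonneg[OF less_imp_le[OF w_pos[of n]] nonneg[of n]] by simp
  have "envelope \<rho> u n \<le> B / w n"
  proof (rule envelope_least[OF nonneg bounded \<rho>])
    fix j
    have "w n * (\<rho> ^ nat \<bar>j\<bar> * u (n + j)) \<le> K ^ nat \<bar>j\<bar> * w (n + j) * (\<rho> ^ nat \<bar>j\<bar> * u (n + j))"
      using shift \<rho> nonneg by (intro mult_right_mono) auto
    also have "\<dots> = (\<rho> * K) ^ nat \<bar>j\<bar> * (w (n + j) * u (n + j))"
      by (simp add: power_mult_distrib ac_simps)
    also have "\<dots> \<le> 1 * B"
      using \<rho>K \<rho> shift_constant_pos B \<open>0 \<le> B\<close> w_pos nonneg
      by (intro mult_mono power_le_one) (auto intro: less_imp_le mult_nonneg_nonneg)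
    finally show "\<rho> ^ nat \<bar>j\<bar> * u (n + j) \<le> B / w n"
      using w_pos[of n] by (simp add: pos_le_divide_eq mult.commute)
  qed
  then show ?thesis
    using w_pos[of n] by (simp add: pos_le_divide_eq mult.commute)
qed

lemma summable_on_weighted_envelope_powr:
  assumes q: "1 \<le> q" and sum: "(\<lambda>n. w n * u n powr q) summable_on UNIV"
  shows "(\<lambda>n. w n * envelope \<rho> u n powr q) summable_on UNIV"
proof -
  define \<kappa> where "\<kappa> = \<rho> powr q * K"
  have "\<rho> powr q \<le> \<rho> powr 1"
    using q \<rho> by (intro powr_mono') auto
  then have "\<kappa> \<le> \<rho> * K"
    using shift_constant_pos \<rho> unfolding \<kappa>_def by (intro mult_right_mono) auto
  then have \<kappa>: "0 \<le> \<kappa>" "\<kappa> < 1"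
    using \<rho>K shift_constant_pos by (simp add: \<kappa>_def, linarith)
  let ?a = "\<lambda>n. w n * u n powr q"
  let ?S = "\<lambda>n. \<Sum>\<^sub>\<infinity>j. \<kappa> ^ nat \<bar>j\<bar> * ?a (n + j)"
  have "0 \<le> \<kappa> ^ nat \<bar>j\<bar>" "0 \<le> ?a n" for j n
    using \<kappa> w_pos[of n] by simp_all
  note conv = summable_on_int_convolution[OF this(1) summable_on_int_geometric[OF \<kappa>] this(2) sum]
  have "w n * envelope \<rho> u n powr q \<le> ?S n" for n
  proof -
    have "envelope \<rho> u n powr q \<le> ?S n / w n"
    proof (rule envelope_powr_least[OF nonneg bounded \<rho>])
      fix j
      have "w n * (\<rho> ^ nat \<bar>j\<bar> * u (n + j)) powr q = w n * (\<rho> powr q) ^ nat \<bar>j\<bar> * u (n + j) powr q"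
        using \<rho> by (simp add: powr_mult powr_realpow[symmetric] powr_powr powr_power mult.commute)
      also have "\<dots> \<le> K ^ nat \<bar>j\<bar> * w (n + j) * (\<rho> powr q) ^ nat \<bar>j\<bar> * u (n + j) powr q"
        using shift by (intro mult_right_mono) auto
      also have "\<dots> = \<kappa> ^ nat \<bar>j\<bar> * ?a (n + j)"
        by (simp add: \<kappa>_def power_mult_distrib ac_simps)
      also have "\<dots> \<le> ?S n"
        using finite_sum_le_infsum[OF conv(1), of "{j}" n] \<kappa> w_pos
        by (simp add: less_imp_le)
      finally show "(\<rho> ^ nat \<bar>j\<bar> * u (n + j)) powr q \<le> ?S n / w n"
        using w_pos[of n] by (simp add: pos_le_divide_eq mult.commute)
    qed (use q in auto)
    then show ?thesis
      using w_pos[of n] by (simp add: pos_le_divide_eq mult.commute)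
  qed
  then show ?thesis
    by (rule summable_on_comparison_test[OF conv(2)]) (use w_pos in \<open>simp add: less_imp_le\<close>)
qed

lemma weighted_finite_envelope:
  assumes "1 \<le> p" and "weighted_finite w p u"
  shows "weighted_finite w p (envelope \<rho> u)"
proof (cases "p = \<infinity>")
  case True
  then obtain B where "\<And>n. w n * u n \<le> B"
    using assms by (auto simp: weighted_finite_def bdd_above_def)
  with True show ?thesis
    by (auto simp: weighted_finite_def bdd_above_def intro: weight_times_envelope_le)
next
  case False
  with assms have "1 \<le> real_of_ereal p"
    by (cases p) auto
  with False assms show ?thesis
    by (simp add: weighted_finite_def summable_on_weighted_envelope_powr)
qed

end

lemma norm_le_of_derivative_bound:
  fixes f :: "real \<Rightarrow> 'a::real_normed_vector"
  assumes "a \<le> b"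
    and f: "\<And>x. x \<in> {a..b} \<Longrightarrow> (f has_vector_derivative f' x) (at x)"
    and \<phi>: "\<And>x. x \<in> {a..b} \<Longrightarrow> (\<phi> has_real_derivative \<phi>' x) (at x)"
    and bound: "\<And>x. x \<in> {a..b} \<Longrightarrow> norm (f' x) \<le> \<phi>' x"
  shows "norm (f b) \<le> norm (f a) + (\<phi> b - \<phi> a)"
proof (cases "a = b")
  case False
  have "norm (f b - f a) \<le> \<phi> b - \<phi> a"
  proof (rule differentiable_bound_general[of a b f \<phi> f' \<phi>'])
    show "continuous_on {a..b} f"
      using f by (meson continuous_at_imp_continuous_on has_vector_derivative_continuous)
    show "continuous_on {a..b} \<phi>"
      using \<phi> by (meson DERIV_isCont continuous_at_imp_continuous_on)
  qed (use \<open>a \<le> b\<close> False f \<phi> bound in \<open>auto simp: has_real_derivative_iff_has_vector_derivative\<close>)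
  then show ?thesis
    using norm_triangle_ineq2[of "f b" "f a"] by linarith
qed simp

lemma lattice_gronwall_iterate:
  fixes f f' :: "int \<Rightarrow> real \<Rightarrow> 'a::real_normed_vector"
  assumes "0 \<le> c"
    and deriv: "\<And>n s. s \<in> {a..b} \<Longrightarrow> (f n has_vector_derivative f' n s) (at s)"
    and growth: "\<And>n s. s \<in> {a..b} \<Longrightarrow>
      norm (f' n s) \<le> c * (norm (f (n - 1) s) + norm (f n s) + norm (f (n + 1) s))"
    and bounded: "\<And>n s. s \<in> {a..b} \<Longrightarrow> norm (f n s) \<le> M"
    and init: "\<And>n. norm (f n a) \<le> G n"
    and super: "\<And>n. G (n - 1) + G n + G (n + 1) \<le> \<mu> * G n"
    and s: "s \<in> {a..b}"
  shows "norm (f n s) \<le> exp (c * \<mu> * (s - a)) * G n + M * (3 * c * (s - a)) ^ m / fact m"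
  using s
proof (induction m arbitrary: n s)
  case 0
  have "0 \<le> G n"
    using init[of n] norm_ge_zero order_trans by blast
  with 0 show ?case
    using bounded by (simp add: add_increasing)
next
  case (Suc m)
  define E where "E x = exp (c * \<mu> * (x - a))" for x
  define R where "R k x = M * (3 * c * (x - a)) ^ k / fact k" for k x
  \<comment> \<open>\<open>\<phi>\<close> is an antiderivative of the bound on \<open>|f\<^sub>n'|\<close> given by the induction hypothesis.\<close>
  define \<phi> where "\<phi> x = E x * G n + R (Suc m) x" for x
  define \<phi>' where "\<phi>' x = c * \<mu> * E x * G n + 3 * c * R m x" for x
  have "(\<phi> has_real_derivative \<phi>' x) (at x)" for x
  proof -
    have "(\<phi> has_real_derivative E x * (c * \<mu> * 1) * G n
        + M * (of_nat (Suc m) * (3 * c * (x - a)) ^ m * (3 * c * 1)) / fact (Suc m)) (at x)"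
      unfolding \<phi>_def E_def R_def by (intro derivative_eq_intros) auto
    moreover have "M * (of_nat (Suc m) * (3 * c * (x - a)) ^ m * (3 * c * 1)) / fact (Suc m) = 3 * c * R m x"
      by (simp add: R_def fact_Suc field_simps del: of_nat_Suc)
    ultimately show ?thesis
      by (simp add: \<phi>'_def ac_simps)
  qed
  moreover have "norm (f' n x) \<le> \<phi>' x" if x: "x \<in> {a..s}" for x
  proof -
    have x': "x \<in> {a..b}"
      using x Suc.prems by auto
    have "norm (f (n - 1) x) + norm (f n x) + norm (f (n + 1) x)
        \<le> E x * (G (n - 1) + G n + G (n + 1)) + 3 * R m x"
      using Suc.IH[OF x', of "n - 1"] Suc.IH[OF x', of n] Suc.IH[OF x', of "n + 1"]
      by (simp add: E_def R_def distrib_left)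
    also have "\<dots> \<le> E x * (\<mu> * G n) + 3 * R m x"
      using super by (simp add: E_def)
    finally have "c * (norm (f (n - 1) x) + norm (f n x) + norm (f (n + 1) x))
        \<le> c * (E x * (\<mu> * G n) + 3 * R m x)"
      using \<open>0 \<le> c\<close> by (rule mult_left_mono)
    also have "\<dots> = \<phi>' x"
      by (simp add: \<phi>'_def algebra_simps)
    finally show ?thesis
      using growth[OF x', of n] by linarith
  qed
  ultimately have "norm (f n s) \<le> norm (f n a) + (\<phi> s - \<phi> a)"
    using Suc.prems deriv by (intro norm_le_of_derivative_bound) auto
  also have "\<dots> \<le> \<phi> s"
    using init[of n] by (simp add: \<phi>_def E_def R_def)
  finally show ?case
    by (simp add: \<phi>_def E_def R_def)
qed

lemma lattice_gronwall_forward: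
  fixes f f' :: "int \<Rightarrow> real \<Rightarrow> 'a::real_normed_vector"
  assumes "0 \<le> c" and "t0 \<le> t1"
    and deriv: "\<And>n s. s \<in> {t0..t1} \<Longrightarrow> (f n has_vector_derivative f' n s) (at s)"
    and growth: "\<And>n s. s \<in> {t0..t1} \<Longrightarrow>
      norm (f' n s) \<le> c * (norm (f (n - 1) s) + norm (f n s) + norm (f (n + 1) s))"
    and bounded: "\<And>n s. s \<in> {t0..t1} \<Longrightarrow> norm (f n s) \<le> M"
    and init: "\<And>n. norm (f n t0) \<le> G n"
    and super: "\<And>n. G (n - 1) + G n + G (n + 1) \<le> \<mu> * G n"
  shows "norm (f n t1) \<le> exp (c * \<mu> * (t1 - t0)) * G n"
proof -
  let ?x = "3 * c * (t1 - t0)"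
  have "(\<lambda>m. exp (c * \<mu> * (t1 - t0)) * G n + M * ?x ^ m / fact m)
      \<longlonglongrightarrow> exp (c * \<mu> * (t1 - t0)) * G n + M * 0"
    using summable_LIMSEQ_zero[OF summable_exp[of ?x]]
    by (simp only: mult.assoc times_divide_eq_right[symmetric]) (intro tendsto_intros, simp add: inverse_eq_divide)
  moreover have "norm (f n t1) \<le> exp (c * \<mu> * (t1 - t0)) * G n + M * ?x ^ m / fact m" for m
    by (rule lattice_gronwall_iterate[where a = t0 and b = t1]) (use assms in auto)
  ultimately show ?thesis
    using LIMSEQ_le_const by force
qed

lemma lattice_gronwall:
  fixes f f' :: "int \<Rightarrow> real \<Rightarrow> 'a::real_normed_vector" and t0 t :: real
  defines "J \<equiv> {min t0 t..max t0 t}"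
  assumes "0 \<le> c"
    and deriv: "\<And>n s. s \<in> J \<Longrightarrow> (f n has_vector_derivative f' n s) (at s)"
    and growth: "\<And>n s. s \<in> J \<Longrightarrow>
      norm (f' n s) \<le> c * (norm (f (n - 1) s) + norm (f n s) + norm (f (n + 1) s))"
    and bounded: "\<And>n s. s \<in> J \<Longrightarrow> norm (f n s) \<le> M"
    and init: "\<And>n. norm (f n t0) \<le> G n"
    and super: "\<And>n. G (n - 1) + G n + G (n + 1) \<le> \<mu> * G n"
  shows "norm (f n t) \<le> exp (c * \<mu> * \<bar>t - t0\<bar>) * G n"
proof (cases "t0 \<le> t")
  case True
  then show ?thesis
    using lattice_gronwall_forward[OF \<open>0 \<le> c\<close> True, of f f' M G \<mu> n] assms
    by (simp add: J_def)
next
  case False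
  define t1 where "t1 = 2 * t0 - t"
  have J: "2 * t0 - s \<in> J" if "s \<in> {t0..t1}" for s
    using that False by (auto simp: J_def t1_def)
  have "((\<lambda>s. 2 * t0 - s) has_vector_derivative -1) (at s)" for s
    by (auto intro!: derivative_eq_intros simp flip: has_real_derivative_iff_has_vector_derivative)
  then have "((\<lambda>s. f n (2 * t0 - s)) has_vector_derivative - f' n (2 * t0 - s)) (at s)"
    if "s \<in> {t0..t1}" for n s
    using vector_diff_chain_at[of "\<lambda>s. 2 * t0 - s" "-1" s "f n", OF _ deriv[OF J[OF that]]]
    by (simp add: o_def)
  then have "norm (f n (2 * t0 - t1)) \<le> exp (c * \<mu> * (t1 - t0)) * G n"
    using False J by (intro lattice_gronwall_forward[OF \<open>0 \<le> c\<close>, where f' = "\<lambda>n s. - f' n (2 * t0 - s)"])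
      (auto simp: t1_def init super intro: growth bounded)
  then show ?thesis
    using False by (simp add: t1_def)
qed

definition AL_field :: "(int \<Rightarrow> complex) \<Rightarrow> (int \<Rightarrow> complex) \<Rightarrow> int \<Rightarrow> complex \<times> complex" where
  "AL_field a b n =
     (\<i> * ((1 - a n * b n) * (a (n - 1) + a (n + 1)) - 2 * a n),
      - \<i> * ((1 - a n * b n) * (b (n - 1) + b (n + 1)) - 2 * b n))"

lemma AL_solution_has_vector_derivative:
  assumes "AL_solution t0 T \<alpha> \<beta>" and "t \<in> {t0 - T<..<t0 + T}"
  shows "((\<lambda>t. (\<alpha> n t, \<beta> n t)) has_vector_derivative AL_field (\<lambda>n. \<alpha> n t) (\<lambda>n. \<beta> n t) n) (at t)"
proof -
  from assms have "\<alpha> n differentiable at t" "\<beta> n differentiable at t"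
    and eq: "- \<i> * vector_derivative (\<alpha> n) (at t)
          - (1 - \<alpha> n t * \<beta> n t) * (\<alpha> (n - 1) t + \<alpha> (n + 1) t) + 2 * \<alpha> n t = 0"
        "- \<i> * vector_derivative (\<beta> n) (at t)
          + (1 - \<alpha> n t * \<beta> n t) * (\<beta> (n - 1) t + \<beta> (n + 1) t) - 2 * \<beta> n t = 0"
    unfolding AL_solution_def by blast+
  moreover have "vector_derivative (\<alpha> n) (at t) = \<i> * ((1 - \<alpha> n t * \<beta> n t) * (\<alpha> (n - 1) t + \<alpha> (n + 1) t) - 2 * \<alpha> n t)"
    using arg_cong[OF eq(1), of "\<lambda>z. \<i> * z"] by (simp add: algebra_simps)
  moreover have "vector_derivative (\<beta> n) (at t) = - \<i> * ((1 - \<alpha> n t * \<beta> n t) * (\<beta> (n - 1) t + \<beta> (n + 1) t) - 2 * \<beta> n t)"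
    using arg_cong[OF eq(2), of "\<lambda>z. \<i> * z"] by (simp add: algebra_simps)
  ultimately show ?thesis
    unfolding AL_field_def
    by (metis has_vector_derivative_Pair vector_derivative_works)
qed

lemma norm_AL_nonlinearity_diff_le:
  fixes a b a' b' x1 x2 y1 y2 :: complex
  assumes "norm a \<le> M" "norm b \<le> M" "norm a' \<le> M" "norm y1 \<le> M" "norm y2 \<le> M"
  shows "norm ((1 - a * b) * (x1 + x2) - (1 - a' * b') * (y1 + y2))
    \<le> (1 + M\<^sup>2) * (norm (x1 - y1) + norm (x2 - y2)) + 2 * M\<^sup>2 * (norm (a - a') + norm (b - b'))"
proof -
  have M: "0 \<le> M"
    using assms(1) norm_ge_zero order_trans by blast
  have "(1 - a * b) * (x1 + x2) - (1 - a' * b') * (y1 + y2)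
      = (1 - a * b) * ((x1 - y1) + (x2 - y2)) - ((a - a') * b + a' * (b - b')) * (y1 + y2)"
    by (simp add: algebra_simps)
  also have "norm \<dots> \<le> norm (1 - a * b) * (norm (x1 - y1) + norm (x2 - y2))
      + (norm (a - a') * norm b + norm a' * norm (b - b')) * (norm y1 + norm y2)"
  proof -
    have "norm ((a - a') * b + a' * (b - b')) \<le> norm (a - a') * norm b + norm a' * norm (b - b')"
      using norm_triangle_ineq[of "(a - a') * b" "a' * (b - b')"] by (simp add: norm_mult)
    then show ?thesis
      by (intro norm_triangle_le_diff add_mono)
         (auto simp: norm_mult intro!: mult_mono norm_triangle_ineq norm_triangle_le)
  qed
  also have "\<dots> \<le> (1 + M\<^sup>2) * (norm (x1 - y1) + norm (x2 - y2))
      + (norm (a - a') * M + M * norm (b - b')) * (M + M)"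
  proof (intro add_mono mult_mono)
    show "norm (1 - a * b) \<le> 1 + M\<^sup>2"
      using norm_triangle_ineq4[of 1 "a * b"] mult_mono[OF assms(1,2)] M
      by (simp add: norm_mult power2_eq_square)
  qed (use assms M in auto)
  finally show ?thesis
    by (simp add: power2_eq_square algebra_simps)
qed

lemma norm_AL_component_diff_le:
  fixes a b a' b' x x' :: "int \<Rightarrow> complex"
  assumes bounded: "norm (a n) \<le> M" "norm (b n) \<le> M" "norm (a' n) \<le> M" "\<And>k. norm (x' k) \<le> M"
    and P: "\<And>k. norm (x k - x' k) \<le> P k" "norm (a n - a' n) \<le> P n" "norm (b n - b' n) \<le> P n"
  shows "norm ((1 - a n * b n) * (x (n - 1) + x (n + 1)) - (1 - a' n * b' n) * (x' (n - 1) + x' (n + 1))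
      - 2 * (x n - x' n)) \<le> 4 * (1 + M\<^sup>2) * (P (n - 1) + P n + P (n + 1))"
proof -
  let ?N = "(1 - a n * b n) * (x (n - 1) + x (n + 1)) - (1 - a' n * b' n) * (x' (n - 1) + x' (n + 1))"
  have "norm ?N \<le> (1 + M\<^sup>2) * (norm (x (n - 1) - x' (n - 1)) + norm (x (n + 1) - x' (n + 1)))
        + 2 * M\<^sup>2 * (norm (a n - a' n) + norm (b n - b' n))"
    by (rule norm_AL_nonlinearity_diff_le) (use bounded in auto)
  moreover have "norm (2 * (x n - x' n)) = 2 * norm (x n - x' n)"
    by (simp only: norm_mult norm_numeral)
  ultimately have "norm (?N - 2 * (x n - x' n))
      \<le> (1 + M\<^sup>2) * (norm (x (n - 1) - x' (n - 1)) + norm (x (n + 1) - x' (n + 1)))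
        + 2 * M\<^sup>2 * (norm (a n - a' n) + norm (b n - b' n)) + 2 * norm (x n - x' n)"
    using norm_triangle_ineq4[of ?N "2 * (x n - x' n)"] by linarith
  also have "\<dots> \<le> (1 + M\<^sup>2) * (P (n - 1) + P (n + 1)) + 2 * M\<^sup>2 * (P n + P n) + 2 * P n"
    using P by (intro add_mono mult_left_mono) auto
  also have "\<dots> \<le> 4 * (1 + M\<^sup>2) * (P (n - 1) + P n + P (n + 1))"
  proof -
    have "0 \<le> P k" "0 \<le> M\<^sup>2 * P k" for k
      using order_trans[OF norm_ge_zero P(1)[of k]] by simp_all
    then show ?thesis
      by (simp add: algebra_simps)
  qed
  finally show ?thesis .
qed

lemma norm_AL_field_diff_le:
  fixes a b a' b' :: "int \<Rightarrow> complex"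
  assumes bounded: "\<And>k. norm (a k) \<le> M" "\<And>k. norm (b k) \<le> M" "\<And>k. norm (a' k) \<le> M" "\<And>k. norm (b' k) \<le> M"
  defines "P \<equiv> \<lambda>k. norm (a k - a' k, b k - b' k)"
  shows "norm (AL_field a b n - AL_field a' b' n) \<le> 8 * (1 + M\<^sup>2) * (P (n - 1) + P n + P (n + 1))"
proof -
  let ?N = "\<lambda>x x'. (1 - a n * b n) * (x (n - 1) + x (n + 1))
    - (1 - a' n * b' n) * (x' (n - 1) + x' (n + 1)) - 2 * (x n - x' n)"
  have "AL_field a b n - AL_field a' b' n = (\<i> * ?N a a', - \<i> * ?N b b')"
    by (simp add: AL_field_def algebra_simps)
  then have "norm (AL_field a b n - AL_field a' b' n) \<le> norm (?N a a') + norm (?N b b')"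
    using norm_Pair_le[of "\<i> * ?N a a'" "- \<i> * ?N b b'"] by (simp add: norm_mult)
  also have "\<dots> \<le> 4 * (1 + M\<^sup>2) * (P (n - 1) + P n + P (n + 1)) + 4 * (1 + M\<^sup>2) * (P (n - 1) + P n + P (n + 1))"
    by (intro add_mono norm_AL_component_diff_le) (auto simp: P_def bounded norm_fst_le norm_snd_le)
  finally show ?thesis
    by (simp add: algebra_simps)
qed

lemma AL_difference_le_envelope:
  fixes \<alpha> \<beta> \<alpha>' \<beta>' :: "int \<Rightarrow> real \<Rightarrow> complex"
  assumes sol1: "AL_solution t0 T \<alpha> \<beta>" and sol2: "AL_solution t0 T \<alpha>' \<beta>'"
    and t: "t \<in> {t0 - T<..<t0 + T}" and \<rho>: "0 < \<rho>" "\<rho> \<le> 1"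
  defines "D \<equiv> \<lambda>s n. norm (\<alpha> n s - \<alpha>' n s, \<beta> n s - \<beta>' n s)"
  obtains C M where "0 \<le> C" "\<And>n. D t n \<le> C * envelope \<rho> (D t0) n" "\<And>n. D t0 n \<le> M"
proof -
  let ?I = "{t0 - T<..<t0 + T}"
  obtain M1 M2 where
    M1: "\<And>n s. s \<in> ?I \<Longrightarrow> norm (\<alpha> n s) \<le> M1 \<and> norm (\<beta> n s) \<le> M1" and
    M2: "\<And>n s. s \<in> ?I \<Longrightarrow> norm (\<alpha>' n s) \<le> M2 \<and> norm (\<beta>' n s) \<le> M2"
    using sol1 sol2 unfolding AL_solution_def by metis
  define M where "M = max M1 M2"
  have bounded: "norm (\<alpha> n s) \<le> M" "norm (\<beta> n s) \<le> M" "norm (\<alpha>' n s) \<le> M" "norm (\<beta>' n s) \<le> M"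
    if "s \<in> ?I" for n s
    using M1[OF that, of n] M2[OF that, of n] by (auto simp: M_def)
  define f where "f n s = (\<alpha> n s - \<alpha>' n s, \<beta> n s - \<beta>' n s)" for n s
  have f_bounded: "norm (f n s) \<le> 4 * M" if "s \<in> ?I" for n s
    using norm_Pair_le[of "\<alpha> n s - \<alpha>' n s" "\<beta> n s - \<beta>' n s"] bounded[OF that, of n]
      norm_triangle_ineq4[of "\<alpha> n s" "\<alpha>' n s"] norm_triangle_ineq4[of "\<beta> n s" "\<beta>' n s"]
    by (simp add: f_def)
  have t0: "t0 \<in> ?I"
    using t by auto
  have J: "{min t0 t..max t0 t} \<subseteq> ?I"
    using t by auto
  let ?G = "envelope \<rho> (D t0)"
  have D_t0: "\<And>n. 0 \<le> D t0 n" "\<And>n. D t0 n \<le> 4 * M"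
    using f_bounded[OF t0] by (simp_all add: D_def f_def)
  have "norm (f n t) \<le> exp (8 * (1 + M\<^sup>2) * (1 + 2 / \<rho>) * \<bar>t - t0\<bar>) * ?G n" for n
  proof (rule lattice_gronwall[where f' = "\<lambda>n s. AL_field (\<lambda>k. \<alpha> k s) (\<lambda>k. \<beta> k s) n - AL_field (\<lambda>k. \<alpha>' k s) (\<lambda>k. \<beta>' k s) n"])
    fix n s assume "s \<in> {min t0 t..max t0 t}"
    then have s: "s \<in> ?I"
      using J by blast
    show "(f n has_vector_derivative AL_field (\<lambda>k. \<alpha> k s) (\<lambda>k. \<beta> k s) n - AL_field (\<lambda>k. \<alpha>' k s) (\<lambda>k. \<beta>' k s) n) (at s)"
      using has_vector_derivative_diff[OF AL_solution_has_vector_derivative[OF sol1 s] AL_solution_has_vector_derivative[OF sol2 s]]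
      by (simp add: f_def [abs_def])
    show "norm (AL_field (\<lambda>k. \<alpha> k s) (\<lambda>k. \<beta> k s) n - AL_field (\<lambda>k. \<alpha>' k s) (\<lambda>k. \<beta>' k s) n)
        \<le> 8 * (1 + M\<^sup>2) * (norm (f (n - 1) s) + norm (f n s) + norm (f (n + 1) s))"
      unfolding f_def by (rule norm_AL_field_diff_le) (use bounded[OF s] in auto)
    show "norm (f n s) \<le> 4 * M"
      using f_bounded[OF s] .
  next
    show "norm (f n t0) \<le> ?G n" for n
      using envelope_ge[OF D_t0 \<rho>] by (simp add: D_def f_def)
    show "?G (n - 1) + ?G n + ?G (n + 1) \<le> (1 + 2 / \<rho>) * ?G n" for n
      by (rule envelope_neighbours_le[OF D_t0 \<rho>])
  qed simp
  with D_t0(2) show ?thesis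
    by (intro that[of "exp (8 * (1 + M\<^sup>2) * (1 + 2 / \<rho>) * \<bar>t - t0\<bar>)" "4 * M"])
       (auto simp: D_def f_def)
qed

theorem lemma2p3:
  fixes w :: "int \<Rightarrow> real" and p :: ereal and t0 T :: real
    and \<alpha> \<beta> \<alpha>' \<beta>' :: "int \<Rightarrow> real \<Rightarrow> complex"
  assumes w_ge: "\<forall>n. w n \<ge> 1"
    and w_ratio: "bdd_above (range (\<lambda>n. \<bar>w (n+1) / w n\<bar> + \<bar>w n / w (n+1)\<bar>))"
    and p: "1 \<le> p"
    and T: "T > 0"
    and sol1: "AL_solution t0 T \<alpha> \<beta>"
    and sol2: "AL_solution t0 T \<alpha>' \<beta>'"
    and fin0: "wnorm_finite w p (\<lambda>n. \<alpha> n t0 - \<alpha>' n t0) (\<lambda>n. \<beta> n t0 - \<beta>' n t0)"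
  shows "\<forall>t\<in>{t0-T<..<t0+T}. wnorm_finite w p (\<lambda>n. \<alpha> n t - \<alpha>' n t) (\<lambda>n. \<beta> n t - \<beta>' n t)"
proof
  fix t assume t: "t \<in> {t0-T<..<t0+T}"
  have w_pos: "\<And>n. 0 < w n"
    using w_ge by (simp add: less_le_trans[OF zero_less_one])
  then have w_nonneg: "\<And>n. 0 \<le> w n"
    by (simp add: less_imp_le)
  have "0 \<le> p"
    using p by (cases p) auto
  obtain K where K: "1 \<le> K" "\<And>n j. w n \<le> K ^ nat \<bar>j\<bar> * w (n + j)"
    using weight_shift_bound_of_bounded_ratio[OF w_pos w_ratio] by blast
  define \<rho> where "\<rho> = 1 / (2 * K)"
  have \<rho>: "0 < \<rho>" "\<rho> \<le> 1" "\<rho> * K < 1"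
    using K(1) by (simp_all add: \<rho>_def)
  let ?D = "\<lambda>s n. norm (\<alpha> n s - \<alpha>' n s, \<beta> n s - \<beta>' n s)"
  obtain C M where C: "0 \<le> C" "\<And>n. ?D t n \<le> C * envelope \<rho> (?D t0) n" and M: "\<And>n. ?D t0 n \<le> M"
    using AL_difference_le_envelope[OF sol1 sol2 t \<rho>(1,2)] by blast
  have iff: "wnorm_finite w p a b \<longleftrightarrow> weighted_finite w p (\<lambda>n. norm (a n, b n))" for a b
    by (rule wnorm_finite_iff_weighted_finite) (use w_nonneg \<open>0 \<le> p\<close> in auto)
  have "weighted_finite w p (?D t0)"
    using fin0 iff by simp
  then have "weighted_finite w p (envelope \<rho> (?D t0))"
    by (intro weighted_finite_envelope[OF _ M \<rho>(1,2) w_pos K(2) \<rho>(3) p]) simp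
  then have "weighted_finite w p (?D t)"
    using w_nonneg \<open>0 \<le> p\<close> C by (intro weighted_finite_le[where u = "?D t" and C = C]) simp_all
  then show "wnorm_finite w p (\<lambda>n. \<alpha> n t - \<alpha>' n t) (\<lambda>n. \<beta> n t - \<beta>' n t)"
    using iff by simp
qed

end
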